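(* Let $L=\langle S,A,\to\rangle$ be a labelled transition system. For all $x,y\in\{o,b\}$ and $s,t\in S$, if $s\mathrel{\underline{\leftrightarrow}}^{ed}_{(x,y)}t$ then $s\equiv^{ed}_{E(x,y)}t$.
   Context: An LTS is $\langle S,A,\to\rangle$ with states $S$, actions $A$ containing the internal action $\tau$, and $\to\subseteq S\times A\times S$; write $s\xrightarrow{a}t$, $\twoheadrightarrow$ for the reflexive-transitive and $\twoheadrightarrow^+$ for the transitive closure of $\xrightarrow{\tau}$. For $R\subseteq S\times S$ and $s,s',t$: $s\twoheadrightarrow_{o,R,t}s'$ iff $s\twoheadrightarrow s'$; $s\twoheadrightarrow_{b,R,t}s'$ iff $s\twoheadrightarrow s'$, $t\,R\,s$ and $t\,R\,s'$. For $x,y\in\{o,b\}$, a symmetric $R$ is an $(x,y)$-generic bisimulation if whenever $s\,R\,t$ and $s\xrightarrow{a}s'$, either $a=\tau$ and $s'\,R\,t$, or there exist $t',t_1,t_2$ with $t\twoheadrightarrow_{x,R,s}t_1\xrightarrow{a}t_2\twoheadrightarrow_{y,R,s'}t'$ and $s'\,R\,t'$. It is an $(x,y)$-generic bisimulation with explicit divergence if moreover for all $s\,R\,t$, if there is an infinite sequence $s=s_0\xrightarrow{\tau}s_1\xrightarrow{\tau}\cdots$, then there exist $t'$ with $t\twoheadrightarrow^+t'$ and some $k$ with $s_k\,R\,t'$. $s\mathrel{\underline{\leftrightarrow}}^{ed}_{(x,y)}t$ iff some such relation relates $s$ and $t$. Game with explicit divergence. Let $\frown,\smile$ be formal tags and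 $E\subseteq\{\frown,\smile\}$. Spoiler-owned configurations $\langle (s,t),c,m,r\rangle_S$ and Duplicator-owned $\langle (s,t),c,m,r\rangle_D$ have $(s,t)\in S\times S$, $c\in (A\times S)\cup\{\dagger\}$, $m\in (S\times\{\frown,\smile\})\cup\{\dagger\}$, $r\in\{*,\checkmark\}$. From $\langle (s,t),c,m,r\rangle_S$ Spoiler may: (S1) move to $\langle (s,t),c,m,*\rangle_D$ if $c\neq\dagger$; (S2a) for some $s\xrightarrow{a}s'$, move to $\langle (s,t),(a,s'),(t,\frown),*\rangle_D$ if $c=\dagger$; (S2b) for some $s\xrightarrow{a}s'$, move to $\langle (s,t),(a,s'),(t,\frown),\checkmark\rangle_D$ if $c\neq (a,s')$; (S3) for some $t\xrightarrow{a}t'$, move to $\langle (t,s),(a,t'),(s,\frown),\checkmark\rangle_D$. From $\langle (u,v),(a,u'),(\bar v,f),r\rangle_D$ Duplicator may: (D1) move to $\langle (u',\bar v),\dagger,\dagger,*\rangle_S$ if $a=\tau$; (D2) if $f=\frown$ and $\bar v\xrightarrow{a}v'$: (a) move to $\langle (u',v'),(a,u'),(v',\smile),*\rangle_S$, or (b) move to $\langle (u',v'),\dagger,\dagger,\checkmark\rangle_S$, or (c) only if $\smile\in E$, move to $\langle (u,v),(a,u'),(v',\smile),*\rangle_S$; (D3) for some $\bar v\xrightarrow{\tau}v'$: (a) move to $\langle (u,v'),(a,u'),(v',f),*\rangle_S$, or (b) only if $f=\smile$, move to $\langle (u',v'),\dagger,\dagger,\checkmark\rangle_S$, or (c) only if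 $f\in E$, move to $\langle (u,v),(a,u'),(v',f),*\rangle_S$. Duplicator wins a finite play if Spoiler gets stuck, and an infinite play if it has infinitely many $\checkmark$ rewards; other plays are won by Spoiler. $s\equiv^{ed}_E t$ iff Duplicator has a strategy winning all plays from $\langle (s,t),\dagger,\dagger,*\rangle_S$. $E(x,y)$ is the smallest set with $\frown\in E(o,y)$ and $\smile\in E(x,o)$ for all $x,y\in\{o,b\}$. *)

theory Defs
  imports Main
begin

datatype mode = ModeO | ModeB
datatype tag = Frown | Smile
datatype reward = Star | Check

definition tau_steps :: "'a \<Rightarrow> ('s \<Rightarrow> 'a \<Rightarrow> 's \<Rightarrow> bool) \<Rightarrow> 's \<Rightarrow> 's \<Rightarrow> bool" where
  "tau_steps tau tr = (\<lambda>x y. tr x tau y)\<^sup>*\<^sup>*"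

definition tau_steps_plus :: "'a \<Rightarrow> ('s \<Rightarrow> 'a \<Rightarrow> 's \<Rightarrow> bool) \<Rightarrow> 's \<Rightarrow> 's \<Rightarrow> bool" where
  "tau_steps_plus tau tr = (\<lambda>x y. tr x tau y)\<^sup>+\<^sup>+"

definition mstep :: "'a \<Rightarrow> ('s \<Rightarrow> 'a \<Rightarrow> 's \<Rightarrow> bool) \<Rightarrow> mode \<Rightarrow> ('s \<Rightarrow> 's \<Rightarrow> bool) \<Rightarrow> 's \<Rightarrow> 's \<Rightarrow> 's \<Rightarrow> bool" where
  "mstep tau tr x R t s s' \<longleftrightarrow>
     tau_steps tau tr s s' \<and> (x = ModeB \<longrightarrow> R t s \<and> R t s')"

definition generic_bisim :: "'a \<Rightarrow> ('s \<Rightarrow> 'a \<Rightarrow> 's \<Rightarrow> bool) \<Rightarrow> mode \<Rightarrow> mode \<Rightarrow> ('s \<Rightarrow> 's \<Rightarrow> bool) \<Rightarrow> bool" where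
  "generic_bisim tau tr x y R \<longleftrightarrow> symp R \<and>
     (\<forall>s t a s'. R s t \<longrightarrow> tr s a s' \<longrightarrow>
        (a = tau \<and> R s' t) \<or>
        (\<exists>t' t1 t2. mstep tau tr x R s t t1 \<and> tr t1 a t2 \<and>
                    mstep tau tr y R s' t2 t' \<and> R s' t'))"

definition generic_bisim_ed :: "'a \<Rightarrow> ('s \<Rightarrow> 'a \<Rightarrow> 's \<Rightarrow> bool) \<Rightarrow> mode \<Rightarrow> mode \<Rightarrow> ('s \<Rightarrow> 's \<Rightarrow> bool) \<Rightarrow> bool" where
  "generic_bisim_ed tau tr x y R \<longleftrightarrow> generic_bisim tau tr x y R \<and>
     (\<forall>s t. R s t \<longrightarrow> (\<forall>f. f 0 = s \<and> (\<forall>n. tr (f n) tau (f (Suc n))) \<longrightarrow>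
        (\<exists>t' k. tau_steps_plus tau tr t t' \<and> R (f k) t')))"

definition bisimilar_ed :: "'a \<Rightarrow> ('s \<Rightarrow> 'a \<Rightarrow> 's \<Rightarrow> bool) \<Rightarrow> mode \<Rightarrow> mode \<Rightarrow> 's \<Rightarrow> 's \<Rightarrow> bool" where
  "bisimilar_ed tau tr x y s t \<longleftrightarrow> (\<exists>R. generic_bisim_ed tau tr x y R \<and> R s t)"

(* Game configurations; None encodes the dagger *)
datatype ('s, 'a) conf =
    SConf "'s \<times> 's" "('a \<times> 's) option" "('s \<times> tag) option" reward
  | DConf "'s \<times> 's" "('a \<times> 's) option" "('s \<times> tag) option" reward

fun is_dconf :: "('s, 'a) conf \<Rightarrow> bool" where
  "is_dconf (SConf _ _ _ _) = False"
| "is_dconf (DConf _ _ _ _) = True"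

fun conf_reward :: "('s, 'a) conf \<Rightarrow> reward" where
  "conf_reward (SConf _ _ _ r) = r"
| "conf_reward (DConf _ _ _ r) = r"

inductive game_move :: "'a \<Rightarrow> ('s \<Rightarrow> 'a \<Rightarrow> 's \<Rightarrow> bool) \<Rightarrow> tag set \<Rightarrow> ('s, 'a) conf \<Rightarrow> ('s, 'a) conf \<Rightarrow> bool"
  for tau tr E where
  S1: "c \<noteq> None \<Longrightarrow> game_move tau tr E (SConf (s, t) c m r) (DConf (s, t) c m Star)"
| S2a: "tr s a s' \<Longrightarrow> c = None \<Longrightarrow>
     game_move tau tr E (SConf (s, t) c m r) (DConf (s, t) (Some (a, s')) (Some (t, Frown)) Star)"
| S2b: "tr s a s' \<Longrightarrow> c \<noteq> Some (a, s') \<Longrightarrow>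
     game_move tau tr E (SConf (s, t) c m r) (DConf (s, t) (Some (a, s')) (Some (t, Frown)) Check)"
| S3: "tr t a t' \<Longrightarrow>
     game_move tau tr E (SConf (s, t) c m r) (DConf (t, s) (Some (a, t')) (Some (s, Frown)) Check)"
| D1: "a = tau \<Longrightarrow>
     game_move tau tr E (DConf (u, v) (Some (a, u')) (Some (vb, f)) r) (SConf (u', vb) None None Star)"
| D2a: "f = Frown \<Longrightarrow> tr vb a v' \<Longrightarrow>
     game_move tau tr E (DConf (u, v) (Some (a, u')) (Some (vb, f)) r)
       (SConf (u', v') (Some (a, u')) (Some (v', Smile)) Star)"
| D2b: "f = Frown \<Longrightarrow> tr vb a v' \<Longrightarrow>
     game_move tau tr E (DConf (u, v) (Some (a, u')) (Some (vb, f)) r)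
       (SConf (u', v') None None Check)"
| D2c: "f = Frown \<Longrightarrow> tr vb a v' \<Longrightarrow> Smile \<in> E \<Longrightarrow>
     game_move tau tr E (DConf (u, v) (Some (a, u')) (Some (vb, f)) r)
       (SConf (u, v) (Some (a, u')) (Some (v', Smile)) Star)"
| D3a: "tr vb tau v' \<Longrightarrow>
     game_move tau tr E (DConf (u, v) (Some (a, u')) (Some (vb, f)) r)
       (SConf (u, v') (Some (a, u')) (Some (v', f)) Star)"
| D3b: "tr vb tau v' \<Longrightarrow> f = Smile \<Longrightarrow>
     game_move tau tr E (DConf (u, v) (Some (a, u')) (Some (vb, f)) r)
       (SConf (u', v') None None Check)"
| D3c: "tr vb tau v' \<Longrightarrow> f \<in> E \<Longrightarrow>
     game_move tau tr E (DConf (u, v) (Some (a, u')) (Some (vb, f)) r)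
       (SConf (u, v) (Some (a, u')) (Some (v', f)) Star)"

(* A Duplicator strategy maps a finite play history (nonempty list, last element
   = current configuration) to the next configuration. *)
type_synonym ('s, 'a) dstrategy = "('s, 'a) conf list \<Rightarrow> ('s, 'a) conf"

definition consistent_prefix ::
  "'a \<Rightarrow> ('s \<Rightarrow> 'a \<Rightarrow> 's \<Rightarrow> bool) \<Rightarrow> tag set \<Rightarrow> ('s, 'a) dstrategy \<Rightarrow> ('s, 'a) conf \<Rightarrow> ('s, 'a) conf list \<Rightarrow> bool" where
  "consistent_prefix tau tr E \<sigma> c0 ps \<longleftrightarrow> ps \<noteq> [] \<and> hd ps = c0 \<and>
     (\<forall>i. Suc i < length ps \<longrightarrow> game_move tau tr E (ps ! i) (ps ! Suc i) \<and>
        (is_dconf (ps ! i) \<longrightarrow> ps ! Suc i = \<sigma> (take (Suc i) ps)))"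

(* sigma is winning for Duplicator from c0: on every consistent finite play ending in a
   Duplicator configuration it prescribes a legal move (so finite maximal plays end with
   Spoiler stuck), and every infinite consistent play has infinitely many check rewards. *)
definition dup_winning ::
  "'a \<Rightarrow> ('s \<Rightarrow> 'a \<Rightarrow> 's \<Rightarrow> bool) \<Rightarrow> tag set \<Rightarrow> ('s, 'a) dstrategy \<Rightarrow> ('s, 'a) conf \<Rightarrow> bool" where
  "dup_winning tau tr E \<sigma> c0 \<longleftrightarrow>
     (\<forall>ps. consistent_prefix tau tr E \<sigma> c0 ps \<longrightarrow> is_dconf (last ps) \<longrightarrow>
        game_move tau tr E (last ps) (\<sigma> ps)) \<and>
     (\<forall>p :: nat \<Rightarrow> ('s, 'a) conf. p 0 = c0 \<longrightarrow>
        (\<forall>n. game_move tau tr E (p n) (p (Suc n)) \<and>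
             (is_dconf (p n) \<longrightarrow> p (Suc n) = \<sigma> (map p [0..<Suc n]))) \<longrightarrow>
        (\<exists>\<^sub>\<infinity>n. conf_reward (p n) = Check))"

definition game_equiv_ed :: "'a \<Rightarrow> ('s \<Rightarrow> 'a \<Rightarrow> 's \<Rightarrow> bool) \<Rightarrow> tag set \<Rightarrow> 's \<Rightarrow> 's \<Rightarrow> bool" where
  "game_equiv_ed tau tr E s t \<longleftrightarrow>
     (\<exists>\<sigma>. dup_winning tau tr E \<sigma> (SConf (s, t) None None Star))"

definition Eset :: "mode \<Rightarrow> mode \<Rightarrow> tag set" where
  "Eset x y = {f. (f = Frown \<and> x = ModeO) \<or> (f = Smile \<and> y = ModeO)}"

end

theory Submission
  imports Defs
begin

(* Duplicator plays positionally from a relation B witnessing the bisimilarity. Against a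
   challenge u -a-> u' she walks along the tau-path that B provides towards a state from which
   the a-step can be matched (the frown phase), takes it, and if y = o walks on to a state
   related to u' (the smile phase). Each walk strictly decreases the distance to its goal, so
   every phase ends with a check reward. Her only other answer is to ignore a tau-challenge
   (D1); a play where eventually only this happens is a tau-divergence of the left state
   against a fixed right state, in which explicit divergence of B exhibits an answerable step.
   For x = b the frown phase must move the right state itself, so the states along the path
   have to stay related: B is then taken to be the largest "lax" (b,y)-bisimulation with
   explicit divergence, which is closed under stuttering and contains every
   (b,y)-bisimulation with explicit divergence. *)

definition reaches :: "('s \<Rightarrow> 's \<Rightarrow> bool) \<Rightarrow> ('s \<Rightarrow> bool) \<Rightarrow> 's \<Rightarrow> bool" where
  "reaches R Q v \<longleftrightarrow> (\<exists>z. R\<^sup>*\<^sup>* v z \<and> Q z)"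

definition reach_dist :: "('s \<Rightarrow> 's \<Rightarrow> bool) \<Rightarrow> ('s \<Rightarrow> bool) \<Rightarrow> 's \<Rightarrow> nat" where
  "reach_dist R Q v = (LEAST n. \<exists>z. (R ^^ n) v z \<and> Q z)"

definition step_toward :: "('s \<Rightarrow> 's \<Rightarrow> bool) \<Rightarrow> ('s \<Rightarrow> bool) \<Rightarrow> 's \<Rightarrow> 's" where
  "step_toward R Q v = (SOME w. R v w \<and> reaches R Q w \<and> reach_dist R Q w < reach_dist R Q v)"

lemma reaches_self: "Q v \<Longrightarrow> reaches R Q v"
  unfolding reaches_def by blast

lemma step_toward:
  assumes "reaches R Q v" "\<not> Q v"
  shows "R v (step_toward R Q v)" "reaches R Q (step_toward R Q v)"
    "reach_dist R Q (step_toward R Q v) < reach_dist R Q v"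
proof -
  let ?d = "reach_dist R Q"
  have "\<exists>z. (R ^^ ?d v) v z \<and> Q z"
    unfolding reach_dist_def
    by (rule LeastI_ex) (use assms(1) in \<open>auto simp: reaches_def rtranclp_power\<close>)
  then obtain z where z: "(R ^^ ?d v) v z" "Q z" by blast
  with assms(2) obtain m where m: "?d v = Suc m" by (cases "?d v") auto
  with z obtain w where w: "R v w" "(R ^^ m) w z" by (metis relpowp_Suc_D2)
  then have "reaches R Q w" "?d w \<le> m"
    using z(2) unfolding reaches_def reach_dist_def
    by (auto simp: rtranclp_power intro: Least_le)
  with w(1) m have "\<exists>w. R v w \<and> reaches R Q w \<and> ?d w < ?d v" by auto
  then have "R v (step_toward R Q v) \<and> reaches R Q (step_toward R Q v) \<and>
      ?d (step_toward R Q v) < ?d v"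
    unfolding step_toward_def by (rule someI_ex)
  then show "R v (step_toward R Q v)" "reaches R Q (step_toward R Q v)"
    "?d (step_toward R Q v) < ?d v" by auto
qed

context
  fixes tau :: 'a and tr :: "'s \<Rightarrow> 'a \<Rightarrow> 's \<Rightarrow> bool"
begin

lemma tau_steps_trans:
  "tau_steps tau tr s s' \<Longrightarrow> tau_steps tau tr s' s'' \<Longrightarrow> tau_steps tau tr s s''"
  unfolding tau_steps_def by (rule rtranclp_trans)

lemma tau_steps_plus_last:
  assumes "tau_steps_plus tau tr s s'"
  obtains s0 where "tau_steps tau tr s s0" "tr s0 tau s'"
  using assms unfolding tau_steps_plus_def tau_steps_def
  by (metis rtranclp.rtrancl_refl tranclp.cases tranclp_into_rtranclp)

lemma tau_steps_cases_last:
  assumes "tau_steps tau tr s s'"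
  obtains "s' = s" | s0 where "tau_steps tau tr s s0" "tr s0 tau s'"
  using assms unfolding tau_steps_def by (blast elim: rtranclp.cases)

lemma mstep_mono:
  assumes "mstep tau tr z R t s s'" "\<And>a b. R a b \<Longrightarrow> Q a b"
  shows "mstep tau tr z Q t s s'"
  using assms unfolding mstep_def by auto

definition explicit_divergence :: "('s \<Rightarrow> 's \<Rightarrow> bool) \<Rightarrow> bool" where
  "explicit_divergence R \<longleftrightarrow> (\<forall>s t f. R s t \<longrightarrow> f 0 = s \<longrightarrow> (\<forall>n. tr (f n) tau (f (Suc n))) \<longrightarrow>
     (\<exists>t' k. tau_steps_plus tau tr t t' \<and> R (f k) t'))"

lemma generic_bisim_ed_iff:
  "generic_bisim_ed tau tr x y R \<longleftrightarrow> generic_bisim tau tr x y R \<and> explicit_divergence R"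
  unfolding generic_bisim_ed_def explicit_divergence_def by blast

definition stutter_closed :: "('s \<Rightarrow> 's \<Rightarrow> bool) \<Rightarrow> bool" where
  "stutter_closed R \<longleftrightarrow> (\<forall>p t q t'. R p t \<longrightarrow> tau_steps tau tr t q \<longrightarrow> tau_steps tau tr q t' \<longrightarrow>
     R p t' \<longrightarrow> R p q)"

text \<open>Where \<open>generic_bisim\<close> must ignore a \<open>\<tau>\<close>-challenge or match it by a \<open>\<tau>\<close>-step, here it may
  be answered by any \<open>\<tau>\<close>-path to a state related to both its source and target. This weaker notion survives the
  stuttering closure, so its largest instance is stutter-closed.\<close>

definition lax_answer :: "mode \<Rightarrow> ('s \<Rightarrow> 's \<Rightarrow> bool) \<Rightarrow> 's \<Rightarrow> 's \<Rightarrow> 'a \<Rightarrow> 's \<Rightarrow> bool" where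
  "lax_answer y R s t a s' \<longleftrightarrow>
     (a = tau \<and> (\<exists>t'. tau_steps tau tr t t' \<and> R s t' \<and> R s' t')) \<or>
     (\<exists>t' t1 t2. mstep tau tr ModeB R s t t1 \<and> tr t1 a t2 \<and> mstep tau tr y R s' t2 t' \<and> R s' t')"

definition lax_bisim :: "mode \<Rightarrow> ('s \<Rightarrow> 's \<Rightarrow> bool) \<Rightarrow> bool" where
  "lax_bisim y R \<longleftrightarrow> symp R \<and> (\<forall>s t a s'. R s t \<longrightarrow> tr s a s' \<longrightarrow> lax_answer y R s t a s')"

definition lax_bisimilar :: "mode \<Rightarrow> 's \<Rightarrow> 's \<Rightarrow> bool" where
  "lax_bisimilar y s t \<longleftrightarrow> (\<exists>R. lax_bisim y R \<and> explicit_divergence R \<and> R s t)"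

lemma lax_answer_mono:
  assumes "lax_answer y R s t a s'" "\<And>a b. R a b \<Longrightarrow> Q a b"
  shows "lax_answer y Q s t a s'"
  using assms mstep_mono[of _ R _ _ _ Q] unfolding lax_answer_def by metis

lemma lax_bisim_tau_steps:
  assumes "lax_bisim y R" "tau_steps tau tr s s'" "R s t"
  shows "\<exists>t'. tau_steps tau tr t t' \<and> R s' t'"
  using assms(2,3) unfolding tau_steps_def
proof (induction rule: rtranclp_induct)
  case (step s1 s2)
  then obtain t1 where t1: "tau_steps tau tr t t1" "R s1 t1"
    unfolding tau_steps_def by blast
  with step.hyps(2) assms(1) have "lax_answer y R s1 t1 tau s2"
    unfolding lax_bisim_def by blast
  then obtain t2 where "tau_steps tau tr t1 t2" "R s2 t2"
    unfolding lax_answer_def mstep_def tau_steps_def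
    by (meson rtranclp.rtrancl_into_rtrancl rtranclp_trans)
  with t1 show ?case unfolding tau_steps_def by (meson rtranclp_trans)
qed auto

lemma lax_bisim_ed_extend:
  assumes S: "lax_bisim y S" "explicit_divergence S"
    and "symp G" "\<And>s t. S s t \<Longrightarrow> G s t"
    and reach: "\<And>s t. G s t \<Longrightarrow> \<exists>d. tau_steps tau tr t d \<and> S s d"
  shows "lax_bisim y G \<and> explicit_divergence G"
proof (intro conjI)
  show "lax_bisim y G" unfolding lax_bisim_def
  proof (intro conjI allI impI)
    fix s t a s' assume "G s t" "tr s a s'"
    from reach[OF \<open>G s t\<close>] obtain d where d: "tau_steps tau tr t d" "S s d" by blast
    with S(1) \<open>tr s a s'\<close> have "lax_answer y S s d a s'" unfolding lax_bisim_def by blast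
    then have "lax_answer y G s d a s'" using assms(4) by (rule lax_answer_mono)
    with d(1) \<open>G s t\<close> show "lax_answer y G s t a s'"
      unfolding lax_answer_def mstep_def by (blast intro: tau_steps_trans)
  qed (fact \<open>symp G\<close>)
  show "explicit_divergence G" unfolding explicit_divergence_def
  proof (intro allI impI)
    fix s t f assume "G s t" "f 0 = s" "\<forall>n. tr (f n) tau (f (Suc n))"
    from reach[OF \<open>G s t\<close>] obtain d where d: "tau_steps tau tr t d" "S s d" by blast
    with S(2) \<open>f 0 = s\<close> \<open>\<forall>n. _\<close> obtain t' k where "tau_steps_plus tau tr d t'" "S (f k) t'"
      unfolding explicit_divergence_def by blast
    with d(1) assms(4) show "\<exists>t' k. tau_steps_plus tau tr t t' \<and> G (f k) t'"
      unfolding tau_steps_def tau_steps_plus_def by (meson rtranclp_tranclp_tranclp)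
  qed
qed

lemma lax_bisim_lax_bisimilar: "lax_bisim y (lax_bisimilar y)"
  unfolding lax_bisim_def
proof (intro conjI allI impI)
  show "symp (lax_bisimilar y)"
    unfolding symp_def lax_bisimilar_def lax_bisim_def by (blast dest: sympD)
next
  fix s t a s' assume "lax_bisimilar y s t" "tr s a s'"
  then obtain R where R: "lax_bisim y R" "explicit_divergence R" "R s t"
    unfolding lax_bisimilar_def by blast
  with \<open>tr s a s'\<close> have "lax_answer y R s t a s'" unfolding lax_bisim_def by blast
  then show "lax_answer y (lax_bisimilar y) s t a s'"
    by (rule lax_answer_mono) (use R in \<open>auto simp: lax_bisimilar_def\<close>)
qed

lemma explicit_divergence_lax_bisimilar: "explicit_divergence (lax_bisimilar y)"
  unfolding explicit_divergence_def
proof (intro allI impI)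
  fix s t f assume "lax_bisimilar y s t" "f 0 = s" "\<forall>n. tr (f n) tau (f (Suc n))"
  moreover from \<open>lax_bisimilar y s t\<close> obtain R
    where R: "lax_bisim y R" "explicit_divergence R" "R s t"
    unfolding lax_bisimilar_def by blast
  ultimately obtain t' k where "tau_steps_plus tau tr t t'" "R (f k) t'"
    unfolding explicit_divergence_def by blast
  with R show "\<exists>t' k. tau_steps_plus tau tr t t' \<and> lax_bisimilar y (f k) t'"
    unfolding lax_bisimilar_def by blast
qed

text \<open>The stuttering closure of \<open>lax_bisimilar\<close> is again a lax bisimulation with explicit
  divergence, hence contained in it.\<close>

lemma stutter_closed_lax_bisimilar: "stutter_closed (lax_bisimilar y)"
  unfolding stutter_closed_def
proof (intro allI impI)
  let ?S = "lax_bisimilar y"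
  have sym: "?S a b \<Longrightarrow> ?S b a" for a b
    using lax_bisim_lax_bisimilar unfolding lax_bisim_def by (blast dest: sympD)
  define X where "X a b \<longleftrightarrow>
    (\<exists>t t'. ?S a t \<and> tau_steps tau tr t b \<and> tau_steps tau tr b t' \<and> ?S a t')" for a b
  define G where "G a b \<longleftrightarrow> ?S a b \<or> X a b \<or> X b a" for a b
  have "lax_bisim y G \<and> explicit_divergence G"
  proof (rule lax_bisim_ed_extend[OF lax_bisim_lax_bisimilar explicit_divergence_lax_bisimilar])
    show "symp G" unfolding symp_def G_def using sym by blast
    show "G s t" if "?S s t" for s t using that unfolding G_def by blast
    show "\<exists>d. tau_steps tau tr t d \<and> ?S s d" if "G s t" for s t
    proof -
      consider "?S s t" | "X s t" | "X t s" using \<open>G s t\<close> unfolding G_def by blast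
      then show ?thesis
      proof cases
        case 1
        then show ?thesis unfolding tau_steps_def by blast
      next
        case 2
        then show ?thesis unfolding X_def by blast
      next
        case 3
        then obtain t0 where "?S t0 t" "tau_steps tau tr t0 s"
          unfolding X_def using sym by blast
        then show ?thesis using lax_bisim_tau_steps[OF lax_bisim_lax_bisimilar] by blast
      qed
    qed
  qed
  then have "G a b \<Longrightarrow> ?S a b" for a b unfolding lax_bisimilar_def by blast
  moreover fix p t q t'
  assume "?S p t" "tau_steps tau tr t q" "tau_steps tau tr q t'" "?S p t'"
  then have "G p q" unfolding G_def X_def by blast
  ultimately show "?S p q" by blast
qed

lemma generic_bisim_ed_lax_bisimilar: "generic_bisim_ed tau tr ModeB y (lax_bisimilar y)"
  unfolding generic_bisim_ed_iff
proof (intro conjI explicit_divergence_lax_bisimilar)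
  let ?S = "lax_bisimilar y"
  show "generic_bisim tau tr ModeB y ?S" unfolding generic_bisim_def
  proof (intro conjI allI impI)
    show "symp ?S" using lax_bisim_lax_bisimilar unfolding lax_bisim_def by blast
  next
    fix s t a s' assume "?S s t" "tr s a s'"
    with lax_bisim_lax_bisimilar have "lax_answer y ?S s t a s'" unfolding lax_bisim_def by blast
    then consider
        t' where "a = tau" "tau_steps tau tr t t'" "?S s t'" "?S s' t'"
      | "\<exists>t' t1 t2. mstep tau tr ModeB ?S s t t1 \<and> tr t1 a t2 \<and> mstep tau tr y ?S s' t2 t' \<and> ?S s' t'"
      unfolding lax_answer_def by blast
    then show "a = tau \<and> ?S s' t \<or>
      (\<exists>t' t1 t2. mstep tau tr ModeB ?S s t t1 \<and> tr t1 a t2 \<and> mstep tau tr y ?S s' t2 t' \<and> ?S s' t')"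
    proof cases
      case (1 t')
      from \<open>tau_steps tau tr t t'\<close> show ?thesis
      proof (cases rule: tau_steps_cases_last)
        case 1
        with \<open>a = tau\<close> \<open>?S s' t'\<close> show ?thesis by simp
      next
        case (2 t0)
        text \<open>The last \<open>\<tau>\<close>-step answers the challenge; \<open>t0\<close> stays related to \<open>s\<close> by stuttering.\<close>
        have "?S s t0"
          using stutter_closed_lax_bisimilar \<open>?S s t\<close> 2 \<open>?S s t'\<close>
          unfolding stutter_closed_def tau_steps_def by blast
        with 1 2 \<open>?S s t\<close> show ?thesis
          unfolding mstep_def tau_steps_def by blast
      qed
    qed simp
  qed
qed

text \<open>A \<open>\<tau>\<close>-challenge ignored by a \<open>generic_bisim\<close> is a lax answer with \<open>t' = t\<close>.\<close>

lemma generic_bisim_ed_le_lax_bisimilar: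
  assumes "generic_bisim_ed tau tr ModeB y R" "R s t"
  shows "lax_bisimilar y s t"
proof -
  have "lax_bisim y R"
    using assms(1) unfolding generic_bisim_ed_iff generic_bisim_def lax_bisim_def lax_answer_def
      tau_steps_def by blast
  with assms show ?thesis unfolding lax_bisimilar_def generic_bisim_ed_iff by blast
qed

lemma bisimilar_ed_stutter_closed_witness:
  assumes "bisimilar_ed tau tr x y s t"
  obtains B where "generic_bisim_ed tau tr x y B" "x = ModeB \<Longrightarrow> stutter_closed B" "B s t"
proof (cases x)
  case ModeO
  with assms that show ?thesis unfolding bisimilar_ed_def by blast
next
  case ModeB
  with assms generic_bisim_ed_le_lax_bisimilar have "lax_bisimilar y s t"
    unfolding bisimilar_ed_def by blast
  with that ModeB generic_bisim_ed_lax_bisimilar stutter_closed_lax_bisimilar show ?thesis by blast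
qed

end

lemma Frown_in_Eset: "x = ModeO \<Longrightarrow> Frown \<in> Eset x y"
  and Smile_in_Eset: "y = ModeO \<Longrightarrow> Smile \<in> Eset x y"
  unfolding Eset_def by simp_all

fun conf_pos :: "('s, 'a) conf \<Rightarrow> 's \<times> 's" where
  "conf_pos (SConf pos _ _ _) = pos"
| "conf_pos (DConf pos _ _ _) = pos"

lemma game_move_spoiler_to_duplicator:
  "game_move tau tr E c c' \<Longrightarrow> \<not> is_dconf c \<Longrightarrow> is_dconf c'"
  by (induction rule: game_move.induct) auto

locale dup_strategy =
  fixes tau :: 'a and tr :: "'s \<Rightarrow> 'a \<Rightarrow> 's \<Rightarrow> bool" and x y :: mode and B :: "'s \<Rightarrow> 's \<Rightarrow> bool"
  assumes bisim: "generic_bisim_ed tau tr x y B"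
    and stutter: "x = ModeB \<Longrightarrow> stutter_closed tau tr B"
begin

abbreviation silent :: "'s \<Rightarrow> 's \<Rightarrow> bool" where
  "silent s s' \<equiv> tr s tau s'"

lemma silent_rtranclp: "silent\<^sup>*\<^sup>* = tau_steps tau tr"
  unfolding tau_steps_def ..

lemma B_sym: "B s t \<Longrightarrow> B t s"
  using bisim unfolding generic_bisim_ed_def generic_bisim_def by (blast dest: sympD)

definition answer_end :: "'s \<Rightarrow> 's \<Rightarrow> bool" where
  "answer_end u' v' \<longleftrightarrow> (if y = ModeB then B u' v' else reaches silent (B u') v')"

definition answer_ready :: "'s \<Rightarrow> 'a \<Rightarrow> 's \<Rightarrow> 's \<Rightarrow> bool" where
  "answer_ready u a u' z \<longleftrightarrow> (x = ModeB \<longrightarrow> B u z) \<and> (\<exists>v'. tr z a v' \<and> answer_end u' v')"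

definition answer_move :: "'s \<Rightarrow> 'a \<Rightarrow> 's \<Rightarrow> 's" where
  "answer_move z a u' = (SOME v'. tr z a v' \<and> answer_end u' v')"

lemma answer_end_of_related: "B u' v' \<Longrightarrow> answer_end u' v'"
  unfolding answer_end_def by (simp add: reaches_self)

lemma answer_move:
  assumes "answer_ready u a u' z"
  shows "tr z a (answer_move z a u')" "answer_end u' (answer_move z a u')"
proof -
  have "\<exists>v'. tr z a v' \<and> answer_end u' v'" using assms unfolding answer_ready_def by blast
  then have "tr z a (answer_move z a u') \<and> answer_end u' (answer_move z a u')"
    unfolding answer_move_def by (rule someI_ex)
  then show "tr z a (answer_move z a u')" "answer_end u' (answer_move z a u')" by auto
qed

fun dup_move :: "('s, 'a) conf \<Rightarrow> ('s, 'a) conf" where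
  "dup_move (DConf (u, v) (Some (a, u')) (Some (vb, Frown)) r) =
     (if \<not> reaches silent (answer_ready u a u') vb then SConf (u', vb) None None Star
      else if answer_ready u a u' vb then
        (if B u' (answer_move vb a u') then SConf (u', answer_move vb a u') None None Check
         else SConf (u, v) (Some (a, u')) (Some (answer_move vb a u', Smile)) Star)
      else if x = ModeB then
        SConf (u, step_toward silent (answer_ready u a u') vb) (Some (a, u'))
          (Some (step_toward silent (answer_ready u a u') vb, Frown)) Star
      else
        SConf (u, v) (Some (a, u')) (Some (step_toward silent (answer_ready u a u') vb, Frown)) Star)"
| "dup_move (DConf (u, v) (Some (a, u')) (Some (vb, Smile)) r) =
     (if B u' (step_toward silent (B u') vb) then SConf (u', step_toward silent (B u') vb) None None Check
      else SConf (u, v) (Some (a, u')) (Some (step_toward silent (B u') vb, Smile)) Star)"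
| "dup_move c = c"

definition dup_inv :: "'s \<Rightarrow> 's \<Rightarrow> 'a \<Rightarrow> 's \<Rightarrow> 's \<Rightarrow> tag \<Rightarrow> bool" where
  "dup_inv u v a u' vb f \<longleftrightarrow> B u v \<and> tr u a u' \<and>
     (case f of
        Frown \<Rightarrow> (x = ModeB \<longrightarrow> vb = v) \<and>
          (reaches silent (answer_ready u a u') vb \<or> vb = v \<and> a = tau \<and> B u' v)
      | Smile \<Rightarrow> y = ModeO \<and> reaches silent (B u') vb \<and> \<not> B u' vb)"

fun conf_inv :: "('s, 'a) conf \<Rightarrow> bool" where
  "conf_inv (SConf (p, q) c m r) \<longleftrightarrow>
     B p q \<and> (\<forall>a u'. c = Some (a, u') \<longrightarrow> (\<exists>vb f. m = Some (vb, f) \<and> dup_inv p q a u' vb f))"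
| "conf_inv (DConf (u, v) c m r) \<longleftrightarrow>
     (\<exists>a u' vb f. c = Some (a, u') \<and> m = Some (vb, f) \<and> dup_inv u v a u' vb f)"

lemma dup_inv_challenge:
  assumes "B s t" "tr s a s'"
  shows "dup_inv s t a s' t Frown"
proof -
  from bisim assms have "a = tau \<and> B s' t \<or>
      (\<exists>t' t1 t2. mstep tau tr x B s t t1 \<and> tr t1 a t2 \<and> mstep tau tr y B s' t2 t' \<and> B s' t')"
    unfolding generic_bisim_ed_def generic_bisim_def by blast
  moreover have "reaches silent (answer_ready s a s') t"
    if "mstep tau tr x B s t t1" "tr t1 a t2" "mstep tau tr y B s' t2 t'" "B s' t'" for t' t1 t2
  proof -
    have "answer_end s' t2"
      using that(3,4) unfolding answer_end_def mstep_def reaches_def silent_rtranclp by auto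
    with that(1,2) show ?thesis
      unfolding reaches_def answer_ready_def mstep_def silent_rtranclp by blast
  qed
  ultimately show ?thesis using assms unfolding dup_inv_def by auto
qed

lemma conf_inv_spoiler_move:
  assumes "game_move tau tr E c c'" "conf_inv c" "\<not> is_dconf c"
  shows "conf_inv c'"
  using assms by (cases rule: game_move.cases) (auto intro: dup_inv_challenge B_sym)

lemma step_toward_answer_related:
  assumes "x = ModeB" "B u v" "reaches silent (answer_ready u a u') v" "\<not> answer_ready u a u' v"
  shows "B u (step_toward silent (answer_ready u a u') v)"
proof -
  let ?w = "step_toward silent (answer_ready u a u') v"
  note w = step_toward[OF assms(3,4)]
  from w(2) obtain z where "tau_steps tau tr ?w z" "B u z"
    unfolding reaches_def answer_ready_def silent_rtranclp using assms(1) by blast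
  moreover have "tau_steps tau tr v ?w" using w(1) unfolding tau_steps_def by blast
  ultimately show ?thesis using stutter[OF assms(1)] assms(2) unfolding stutter_closed_def by blast
qed

text \<open>The locale constants depend on \<open>x\<close> and \<open>y\<close>, so facts like \<open>x = ModeB\<close> must not be
  handed to the simplifier before \<open>dup_move\<close> has been unfolded; they are passed in
  instantiated form (\<open>if_P[OF ModeB]\<close>, \<open>Smile_in_Eset[OF yO]\<close>) instead.\<close>

lemma dup_move_frown_legal:
  fixes r :: reward
  assumes "dup_inv u v a u' vb Frown"
  defines "c \<equiv> DConf (u, v) (Some (a, u')) (Some (vb, Frown)) r"
  shows "game_move tau tr (Eset x y) c (dup_move c) \<and> conf_inv (dup_move c)"
proof -
  let ?Q = "answer_ready u a u'"
  have inv: "B u v" "tr u a u'" "x = ModeB \<Longrightarrow> vb = v"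
    "reaches silent ?Q vb \<or> vb = v \<and> a = tau \<and> B u' v"
    using assms(1) unfolding dup_inv_def by auto
  consider (unanswerable) "\<not> reaches silent ?Q vb" | (ready) "?Q vb"
    | (toward) "reaches silent ?Q vb" "\<not> ?Q vb"
    by blast
  then show ?thesis
  proof cases
    case unanswerable
    with inv show ?thesis unfolding c_def by (auto intro: game_move.D1)
  next
    case ready
    let ?v' = "answer_move vb a u'"
    note v' = answer_move[OF ready]
    show ?thesis
    proof (cases "B u' ?v'")
      case True
      with ready v' show ?thesis unfolding c_def by (auto simp: reaches_self intro: game_move.D2b)
    next
      case False
      with v'(2) have yO: "y = ModeO" and "reaches silent (B u') ?v'"
        unfolding answer_end_def by (cases y; simp)+
      with False inv have "dup_inv u v a u' ?v' Smile" unfolding dup_inv_def by simp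
      with False ready v' inv Smile_in_Eset[OF yO] show ?thesis
        unfolding c_def by (auto simp: reaches_self intro: game_move.D2c)
    qed
  next
    case toward
    note w = step_toward[OF toward]
    show ?thesis
    proof (cases x)
      case ModeB
      with inv have "vb = v" by simp
      with step_toward_answer_related[OF ModeB inv(1)] toward w inv(1,2) show ?thesis
        unfolding c_def by (auto simp: dup_inv_def if_P[OF ModeB] intro: game_move.D3a)
    next
      case ModeO
      then have "x \<noteq> ModeB" by simp
      with toward w inv(1,2) Frown_in_Eset[OF ModeO] show ?thesis
        unfolding c_def by (auto simp: dup_inv_def intro: game_move.D3c)
    qed
  qed
qed

lemma dup_move_smile_legal:
  fixes r :: reward
  assumes "dup_inv u v a u' vb Smile"
  defines "c \<equiv> DConf (u, v) (Some (a, u')) (Some (vb, Smile)) r"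
  shows "game_move tau tr (Eset x y) c (dup_move c) \<and> conf_inv (dup_move c)"
proof -
  let ?w = "step_toward silent (B u') vb"
  have inv: "B u v" "tr u a u'" "y = ModeO" "reaches silent (B u') vb" "\<not> B u' vb"
    using assms(1) unfolding dup_inv_def by auto
  note w = step_toward[OF inv(4,5)]
  show ?thesis
  proof (cases "B u' ?w")
    case True
    with w show ?thesis unfolding c_def by (auto intro: game_move.D3b)
  next
    case False
    with w inv have "dup_inv u v a u' ?w Smile" unfolding dup_inv_def by simp
    with False w inv(1) Smile_in_Eset[OF inv(3)] show ?thesis
      unfolding c_def by (auto intro: game_move.D3c)
  qed
qed

lemma dup_move_legal:
  fixes r :: reward
  assumes "dup_inv u v a u' vb f"
  defines "c \<equiv> DConf (u, v) (Some (a, u')) (Some (vb, f)) r"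
  shows "game_move tau tr (Eset x y) c (dup_move c) \<and> conf_inv (dup_move c)"
  using assms dup_move_frown_legal dup_move_smile_legal by (cases f) auto

lemma conf_inv_move:
  assumes "conf_inv c" "game_move tau tr (Eset x y) c c'" "is_dconf c \<Longrightarrow> c' = dup_move c"
  shows "conf_inv c'"
proof (cases "is_dconf c")
  case True
  then obtain u v a u' vb f r where "c = DConf (u, v) (Some (a, u')) (Some (vb, f)) r"
    "dup_inv u v a u' vb f"
    using assms(1) by (cases c) auto
  with dup_move_legal assms(3) True show ?thesis by blast
qed (use assms conf_inv_spoiler_move in blast)

lemma divergence_answerable:
  assumes related: "\<And>i. B (s i) v" and diverges: "\<And>i. silent (s i) (s (Suc i))"
  shows "\<exists>k. reaches silent (answer_ready (s k) tau (s (Suc k))) v"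
proof -
  have "explicit_divergence tau tr B" using bisim unfolding generic_bisim_ed_iff by blast
  then have "\<exists>t' k. tau_steps_plus tau tr v t' \<and> B ((\<lambda>i. s (Suc i)) k) t'"
    unfolding explicit_divergence_def
    by (elim allE[of _ "s 1"] allE[of _ v] allE[of _ "\<lambda>i. s (Suc i)"]) (use related diverges in auto)
  then obtain t' k where t': "tau_steps_plus tau tr v t'" "B (s (Suc k)) t'" by auto
  show ?thesis
  proof (cases x)
    case ModeB
    from tranclpD[OF t'(1)[unfolded tau_steps_plus_def]] obtain c
      where c: "silent v c" "tau_steps tau tr c t'"
      unfolding tau_steps_def by blast
    then have "tau_steps tau tr v c" unfolding tau_steps_def by blast
    with stutter[OF ModeB, unfolded stutter_closed_def] related c(2) t'(2)
    have "B (s (Suc k)) c" by blast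
    then have "answer_end (s (Suc k)) c" by (rule answer_end_of_related)
    with c(1) related have "answer_ready (s k) tau (s (Suc k)) v"
      unfolding answer_ready_def by blast
    then show ?thesis by (blast intro: reaches_self)
  next
    case ModeO
    from t'(1) obtain t0 where "tau_steps tau tr v t0" "silent t0 t'"
      by (rule tau_steps_plus_last)
    moreover have "answer_end (s (Suc k)) t'" using t'(2) by (rule answer_end_of_related)
    ultimately have "\<exists>z. silent\<^sup>*\<^sup>* v z \<and> answer_ready (s k) tau (s (Suc k)) z"
      using ModeO unfolding answer_ready_def silent_rtranclp by blast
    then show ?thesis unfolding reaches_def by blast
  qed
qed

definition strategy_play :: "(nat \<Rightarrow> ('s, 'a) conf) \<Rightarrow> bool" where
  "strategy_play p \<longleftrightarrow> conf_inv (p 0) \<and>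
     (\<forall>n. game_move tau tr (Eset x y) (p n) (p (Suc n)) \<and>
          (is_dconf (p n) \<longrightarrow> p (Suc n) = dup_move (p n)))"

context
  fixes p :: "nat \<Rightarrow> ('s, 'a) conf"
  assumes play: "strategy_play p"
begin

lemma play_move: "game_move tau tr (Eset x y) (p n) (p (Suc n))"
  and play_dup_move: "is_dconf (p n) \<Longrightarrow> p (Suc n) = dup_move (p n)"
  using play unfolding strategy_play_def by blast+

lemma play_conf_inv: "conf_inv (p n)"
proof (induction n)
  case 0
  then show ?case using play unfolding strategy_play_def by blast
next
  case (Suc n)
  then show ?case using conf_inv_move play_move play_dup_move by blast
qed

lemma play_continue_checks:
  assumes "p (Suc n) = SConf pos (Some ch) m r"
    and "p (Suc (Suc n)) = DConf pos (Some ch) m Star \<Longrightarrow>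
      \<exists>k>Suc (Suc n). conf_reward (p k) = Check"
  shows "\<exists>k>n. conf_reward (p k) = Check"
proof (cases "conf_reward (p (Suc (Suc n))) = Check")
  case False
  with play_move[of "Suc n"] assms(1) have "p (Suc (Suc n)) = DConf pos (Some ch) m Star"
    by (cases rule: game_move.cases) auto
  with assms(2) show ?thesis by (meson Suc_lessD)
qed (meson Suc_lessD lessI)

lemma play_spoiler_challenges:
  assumes "p n = SConf (s, t) None m r" "conf_reward (p (Suc n)) \<noteq> Check"
  shows "\<exists>a s'. p (Suc n) = DConf (s, t) (Some (a, s')) (Some (t, Frown)) Star"
  using play_move[of n] assms by (cases rule: game_move.cases) auto

lemma play_smile_checks:
  assumes "p n = DConf (u, v) (Some (a, u')) (Some (vb, Smile)) r"
  shows "\<exists>m>n. conf_reward (p m) = Check"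
  using assms
proof (induction "reach_dist silent (B u') vb" arbitrary: n vb r rule: less_induct)
  case less
  from play_conf_inv[of n] less.prems have "reaches silent (B u') vb" "\<not> B u' vb"
    by (auto simp: dup_inv_def)
  note w = step_toward[OF this]
  let ?w = "step_toward silent (B u') vb"
  have move: "p (Suc n) = dup_move (p n)" using play_dup_move less.prems by simp
  show ?case
  proof (cases "B u' ?w")
    case True
    with move less.prems have "conf_reward (p (Suc n)) = Check" by simp
    then show ?thesis by blast
  next
    case False
    with move less.prems have "p (Suc n) = SConf (u, v) (Some (a, u')) (Some (?w, Smile)) Star"
      by simp
    then show ?thesis by (rule play_continue_checks) (rule less.hyps[OF w(3)])
  qed
qed

lemma play_answer_checks:
  assumes "p n = DConf (u, v) (Some (a, u')) (Some (vb, Frown)) r"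
    "reaches silent (answer_ready u a u') vb"
  shows "\<exists>m>n. conf_reward (p m) = Check"
  using assms
proof (induction "reach_dist silent (answer_ready u a u') vb" arbitrary: n v vb r rule: less_induct)
  case less
  have move: "p (Suc n) = dup_move (p n)" using play_dup_move less.prems by simp
  show ?case
  proof (cases "answer_ready u a u' vb")
    case True
    let ?v' = "answer_move vb a u'"
    show ?thesis
    proof (cases "B u' ?v'")
      case False
      with True move less.prems
      have "p (Suc n) = SConf (u, v) (Some (a, u')) (Some (?v', Smile)) Star" by simp
      then show ?thesis by (rule play_continue_checks) (rule play_smile_checks)
    qed (use True move less.prems in \<open>auto intro!: exI[of _ "Suc n"]\<close>)
  next
    case False
    note w = step_toward[OF less.prems(2) False]
    let ?w = "step_toward silent (answer_ready u a u') vb"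
    from False move less.prems obtain v2
      where "p (Suc n) = SConf (u, v2) (Some (a, u')) (Some (?w, Frown)) Star"
      by (auto split: if_splits)
    then show ?thesis by (rule play_continue_checks) (rule less.hyps[OF w(3) _ w(2)])
  qed
qed

lemma play_stalls:
  assumes "\<forall>m>n. conf_reward (p m) \<noteq> Check" "is_dconf (p n)"
  obtains u u' v where "conf_pos (p n) = (u, v)" "conf_pos (p (Suc (Suc n))) = (u', v)"
    "is_dconf (p (Suc (Suc n)))" "B u v" "silent u u'" "\<not> reaches silent (answer_ready u tau u') v"
proof -
  obtain u v a u' vb f r where pn: "p n = DConf (u, v) (Some (a, u')) (Some (vb, f)) r"
    and inv: "dup_inv u v a u' vb f"
    using play_conf_inv[of n] assms(2) by (cases "p n") auto
  have "f = Frown"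
    using play_smile_checks[of n u v a u' vb r] pn assms(1) by (cases f) auto
  moreover have unanswerable: "\<not> reaches silent (answer_ready u a u') vb"
    using play_answer_checks[of n u v a u' vb r] pn assms(1) \<open>f = Frown\<close> by auto
  ultimately have "vb = v" "a = tau" "B u v" "B u' v" "silent u u'"
    using inv unfolding dup_inv_def by auto
  with unanswerable pn play_dup_move[of n] \<open>f = Frown\<close> have "p (Suc n) = SConf (u', v) None None Star"
    by simp
  with play_spoiler_challenges[of "Suc n"] assms(1)
  obtain a' u'' where "p (Suc (Suc n)) = DConf (u', v) (Some (a', u'')) (Some (v, Frown)) Star"
    by fastforce
  with that pn \<open>B u v\<close> \<open>silent u u'\<close> unanswerable \<open>vb = v\<close> \<open>a = tau\<close> show thesis by simp
qed

lemma play_infinitely_many_checks: "\<exists>\<^sub>\<infinity>n. conf_reward (p n) = Check"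
proof (rule ccontr)
  assume "\<not> (\<exists>\<^sub>\<infinity>n. conf_reward (p n) = Check)"
  then obtain N where N: "\<forall>m>N. conf_reward (p m) \<noteq> Check"
    unfolding cofinite_eq_sequentially frequently_sequentially by (meson less_imp_le)
  obtain n0 where "n0 \<ge> N" "is_dconf (p n0)"
    using game_move_spoiler_to_duplicator[OF play_move[of N]] by (metis le_SucI order_refl)
  define s where "s i = fst (conf_pos (p (n0 + 2 * i)))" for i
  define v where "v = snd (conf_pos (p n0))"
  have dconf: "is_dconf (p (n0 + 2 * i)) \<and> snd (conf_pos (p (n0 + 2 * i))) = v" for i
  proof (induction i)
    case (Suc i)
    moreover have "\<forall>m>n0 + 2 * i. conf_reward (p m) \<noteq> Check" using N \<open>n0 \<ge> N\<close> by simp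
    ultimately show ?case by (elim conjE) (erule play_stalls; auto)
  qed (use \<open>is_dconf (p n0)\<close> v_def in simp)
  have "B (s i) v \<and> silent (s i) (s (Suc i)) \<and>
      \<not> reaches silent (answer_ready (s i) tau (s (Suc i))) v" for i
  proof -
    have "\<forall>m>n0 + 2 * i. conf_reward (p m) \<noteq> Check" using N \<open>n0 \<ge> N\<close> by simp
    with dconf[of i] show ?thesis by (elim conjE) (erule play_stalls; auto simp: s_def)
  qed
  then show False using divergence_answerable[of s v] by blast
qed

end

lemma consistent_prefix_conf_inv:
  assumes "consistent_prefix tau tr (Eset x y) (\<lambda>ps. dup_move (last ps)) c0 ps" "conf_inv c0"
    "i < length ps"
  shows "conf_inv (ps ! i)"
  using assms(3)
proof (induction i)
  case 0
  then show ?case using assms(1,2) unfolding consistent_prefix_def by (metis hd_conv_nth)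
next
  case (Suc i)
  have "last (take (Suc i) ps) = ps ! i"
    using Suc.prems by (subst last_conv_nth) (auto simp: min_def)
  with Suc assms(1) show ?case
    unfolding consistent_prefix_def by (auto intro: conf_inv_move)
qed

lemma dup_move_winning:
  assumes "B s t"
  shows "dup_winning tau tr (Eset x y) (\<lambda>ps. dup_move (last ps)) (SConf (s, t) None None Star)"
  unfolding dup_winning_def
proof (intro conjI allI impI)
  fix ps
  assume ps: "consistent_prefix tau tr (Eset x y) (\<lambda>ps. dup_move (last ps)) (SConf (s, t) None None Star) ps"
    and "is_dconf (last ps)"
  then have "ps \<noteq> []" unfolding consistent_prefix_def by simp
  with consistent_prefix_conf_inv[OF ps] assms have "conf_inv (last ps)"
    by (simp add: last_conv_nth)
  then obtain u v a u' vb f r where "last ps = DConf (u, v) (Some (a, u')) (Some (vb, f)) r"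
    "dup_inv u v a u' vb f"
    using \<open>is_dconf (last ps)\<close> by (cases "last ps") auto
  then show "game_move tau tr (Eset x y) (last ps) (dup_move (last ps))"
    using dup_move_legal[of u v a u' vb f r] by simp
next
  fix p :: "nat \<Rightarrow> ('s, 'a) conf"
  assume "p 0 = SConf (s, t) None None Star"
    "\<forall>n. game_move tau tr (Eset x y) (p n) (p (Suc n)) \<and>
      (is_dconf (p n) \<longrightarrow> p (Suc n) = dup_move (last (map p [0..<Suc n])))"
  with assms have "strategy_play p" unfolding strategy_play_def by simp
  then show "\<exists>\<^sub>\<infinity>n. conf_reward (p n) = Check" by (rule play_infinitely_many_checks)
qed

end

theorem lemma6p7:
  fixes tau :: 'a and tr :: "'s \<Rightarrow> 'a \<Rightarrow> 's \<Rightarrow> bool"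
    and x y :: mode and s t :: 's
  assumes "bisimilar_ed tau tr x y s t"
  shows "game_equiv_ed tau tr (Eset x y) s t"
proof -
  obtain B where "generic_bisim_ed tau tr x y B" "x = ModeB \<Longrightarrow> stutter_closed tau tr B" "B s t"
    using assms by (rule bisimilar_ed_stutter_closed_witness) blast
  then interpret dup_strategy tau tr x y B by unfold_locales
  show ?thesis unfolding game_equiv_ed_def using dup_move_winning \<open>B s t\<close> by blast
qed

end
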